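(* Let $\mu$ be a probability measure and let $(\mathcal E,\mathcal D(\mathcal E))$ be a non-conservative symmetric Dirichlet form on $L^2(\mu)$. Then $(\mathcal E,\mathcal D(\mathcal E))$ is irreducible if and only if there exists a function $\alpha:(0,\infty)\to(0,\infty)$ such that $$\mu(f^2)\le\alpha(r)\,\mathcal E(f,f)+r\|f\|_\infty^2,\qquad r>0,\ f\in\mathcal D(\mathcal E).$$ Consequently, for any symmetric (sub-)Markov semigroup $(P_t)_{t\ge0}$ on $L^2(\mu)$, one has $\lim_{t\to\infty}\|P_tf\|_{L^2(\mu)}=0$ for every $f\in L^2(\mu)$ if and only if $\lim_{t\to\infty}\|P_t\|_{\infty\to2}=0$, where $\|P_t\|_{\infty\to2}$ denotes the operator norm of $P_t$ from $L^\infty(\mu)$ to $L^2(\mu)$.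
   Context: Non-conservative means either $1\notin\mathcal D(\mathcal E)$, or $1\in\mathcal D(\mathcal E)$ but $\mathcal E(1,1)>0$. In this setting, irreducible means that $f\in\mathcal D(\mathcal E)$ with $\mathcal E(f,f)=0$ implies $f=0$. *)

theory Defs
  imports "HOL-Probability.Probability"
begin

text \<open>Elements of L^2(mu) are represented by real-valued measurable square-integrable
functions; all statements respect almost-everywhere equality.\<close>

definition L2 :: "'a measure \<Rightarrow> ('a \<Rightarrow> real) set" where
  "L2 M = {f. f \<in> borel_measurable M \<and> integrable M (\<lambda>x. (f x)^2)}"

definition l2norm :: "'a measure \<Rightarrow> ('a \<Rightarrow> real) \<Rightarrow> real" where
  "l2norm M f = sqrt (\<integral>x. (f x)^2 \<partial>M)"

definition linfnorm :: "'a measure \<Rightarrow> ('a \<Rightarrow> real) \<Rightarrow> ereal" where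
  "linfnorm M f = esssup M (\<lambda>x. ereal \<bar>f x\<bar>)"

definition E1 :: "'a measure \<Rightarrow> (('a \<Rightarrow> real) \<Rightarrow> ('a \<Rightarrow> real) \<Rightarrow> real) \<Rightarrow> ('a \<Rightarrow> real) \<Rightarrow> real" where
  "E1 M E h = E h h + (\<integral>x. (h x)^2 \<partial>M)"

text \<open>Symmetric Dirichlet form (E, D) on L^2(M): a densely defined, closed, nonnegative,
symmetric bilinear form with the Markov (unit contraction) property.\<close>
definition dirichlet_form ::
  "'a measure \<Rightarrow> ('a \<Rightarrow> real) set \<Rightarrow> (('a \<Rightarrow> real) \<Rightarrow> ('a \<Rightarrow> real) \<Rightarrow> real) \<Rightarrow> bool" where
  "dirichlet_form M D E \<longleftrightarrow>
     D \<subseteq> L2 M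
   \<and> (\<lambda>x. 0) \<in> D
   \<and> (\<forall>f\<in>D. \<forall>g\<in>D. (\<lambda>x. f x + g x) \<in> D)
   \<and> (\<forall>f\<in>D. \<forall>c::real. (\<lambda>x. c * f x) \<in> D)
   \<and> (\<forall>f\<in>D. \<forall>g. g \<in> borel_measurable M \<and> (AE x in M. f x = g x)
          \<longrightarrow> g \<in> D \<and> (\<forall>h\<in>D. E g h = E f h))
   \<and> (\<forall>f\<in>L2 M. \<forall>e>0. \<exists>g\<in>D. l2norm M (\<lambda>x. f x - g x) < e)
   \<and> (\<forall>f\<in>D. \<forall>g\<in>D. E f g = E g f)
   \<and> (\<forall>f\<in>D. \<forall>g\<in>D. \<forall>h\<in>D. E (\<lambda>x. f x + g x) h = E f h + E g h)
   \<and> (\<forall>f\<in>D. \<forall>g\<in>D. \<forall>c::real. E (\<lambda>x. c * f x) g = c * E f g)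
   \<and> (\<forall>f\<in>D. E f f \<ge> 0)
   \<and> (\<forall>u::nat \<Rightarrow> 'a \<Rightarrow> real. (\<forall>n. u n \<in> D) \<and>
          (\<forall>e>0. \<exists>N. \<forall>m\<ge>N. \<forall>n\<ge>N. E1 M E (\<lambda>x. u m x - u n x) < e)
        \<longrightarrow> (\<exists>f\<in>D. (\<lambda>n. E1 M E (\<lambda>x. u n x - f x)) \<longlonglongrightarrow> 0))
   \<and> (\<forall>f\<in>D. (\<lambda>x. min 1 (max 0 (f x))) \<in> D
          \<and> E (\<lambda>x. min 1 (max 0 (f x))) (\<lambda>x. min 1 (max 0 (f x))) \<le> E f f)"

definition non_conservative ::
  "'a measure \<Rightarrow> ('a \<Rightarrow> real) set \<Rightarrow> (('a \<Rightarrow> real) \<Rightarrow> ('a \<Rightarrow> real) \<Rightarrow> real) \<Rightarrow> bool" where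
  "non_conservative M D E \<longleftrightarrow>
     (\<lambda>x. 1) \<notin> D \<or> ((\<lambda>x. 1) \<in> D \<and> E (\<lambda>x. 1) (\<lambda>x. 1) > 0)"

definition irreducible_form ::
  "'a measure \<Rightarrow> ('a \<Rightarrow> real) set \<Rightarrow> (('a \<Rightarrow> real) \<Rightarrow> ('a \<Rightarrow> real) \<Rightarrow> real) \<Rightarrow> bool" where
  "irreducible_form M D E \<longleftrightarrow> (\<forall>f\<in>D. E f f = 0 \<longrightarrow> (AE x in M. f x = 0))"

definition symmetric_subMarkov_semigroup ::
  "'a measure \<Rightarrow> (real \<Rightarrow> ('a \<Rightarrow> real) \<Rightarrow> ('a \<Rightarrow> real)) \<Rightarrow> bool" where
  "symmetric_subMarkov_semigroup M P \<longleftrightarrow>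
     (\<forall>t\<ge>0. \<forall>f\<in>L2 M. P t f \<in> L2 M)
   \<and> (\<forall>t\<ge>0. \<forall>f\<in>L2 M. \<forall>g\<in>L2 M. AE x in M. P t (\<lambda>y. f y + g y) x = P t f x + P t g x)
   \<and> (\<forall>t\<ge>0. \<forall>f\<in>L2 M. \<forall>c::real. AE x in M. P t (\<lambda>y. c * f y) x = c * P t f x)
   \<and> (\<forall>t\<ge>0. \<forall>f\<in>L2 M. \<forall>g\<in>L2 M. (AE x in M. f x = g x) \<longrightarrow> (AE x in M. P t f x = P t g x))
   \<and> (\<forall>f\<in>L2 M. AE x in M. P 0 f x = f x)
   \<and> (\<forall>s\<ge>0. \<forall>t\<ge>0. \<forall>f\<in>L2 M. AE x in M. P (s + t) f x = P s (P t f) x)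
   \<and> (\<forall>t\<ge>0. \<forall>f\<in>L2 M. \<forall>g\<in>L2 M. (\<integral>x. P t f x * g x \<partial>M) = (\<integral>x. f x * P t g x \<partial>M))
   \<and> (\<forall>t\<ge>0. \<forall>f\<in>L2 M. (AE x in M. 0 \<le> f x \<and> f x \<le> 1)
          \<longrightarrow> (AE x in M. 0 \<le> P t f x \<and> P t f x \<le> 1))
   \<and> (\<forall>f\<in>L2 M. ((\<lambda>t. l2norm M (\<lambda>x. P t f x - f x)) \<longlongrightarrow> 0) (at_right 0))"

definition opnorm_inf2 :: "'a measure \<Rightarrow> (('a \<Rightarrow> real) \<Rightarrow> ('a \<Rightarrow> real)) \<Rightarrow> real" where
  "opnorm_inf2 M T = Sup {l2norm M (T f) | f. f \<in> borel_measurable M \<and> (AE x in M. \<bar>f x\<bar> \<le> 1)}"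

end

theory Submission
  imports Defs
begin

text \<open>
  If the inequality failed for some \<open>r > 0\<close>, rescaling and truncating violating functions
  would give unit-bounded \<open>g\<^sub>n \<in> D\<close> with \<open>E(g\<^sub>n, g\<^sub>n) \<le> 1/(n+1)\<close> and mean at least \<open>r/2\<close>.
  Minimising \<open>E\<^sub>1\<close> over the nested convex sets of such functions produces, via the
  parallelogram law and closedness of the form, an \<open>E\<^sub>1\<close>-limit \<open>f\<close> with \<open>E(f, f) = 0\<close> and
  positive mean, contradicting irreducibility. Conversely, applied to the unit contraction of
  a null function \<open>\<plusminus>f\<close>, the inequality gives \<open>\<mu>(g\<^sup>2) \<le> r\<close> for every \<open>r > 0\<close>, so \<open>f = 0\<close>.

  For the semigroup, the Kadison--Schwarz inequality \<open>(P\<^sub>t h)\<^sup>2 \<le> P\<^sub>t(h\<^sup>2) \<cdot> P\<^sub>t 1\<close> shows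
  that \<open>P\<^sub>t\<close> is an \<open>L\<^sup>2\<close>-contraction and that \<open>\<parallel>P\<^sub>t\<parallel>\<^sub>\<infinity>\<^sub>\<rightarrow>\<^sub>2 = \<parallel>P\<^sub>t 1\<parallel>\<^sub>2\<close>; splitting \<open>f\<close>
  into a bounded part and a small \<open>L\<^sup>2\<close>-tail then gives the equivalence.
\<close>

section \<open>Square-integrable functions\<close>

lemma square_le_of_abs_le: "\<bar>x\<bar> \<le> K \<Longrightarrow> x^2 \<le> K^2" for x K :: real
  by (metis abs_ge_zero order_trans power2_le_iff_abs_le)

lemma L2_measurable: "f \<in> L2 M \<Longrightarrow> f \<in> borel_measurable M"
  and L2_integrable_square: "f \<in> L2 M \<Longrightarrow> integrable M (\<lambda>x. (f x)^2)"
  by (simp_all add: L2_def)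

lemma (in finite_measure) L2_integrable: "f \<in> L2 M \<Longrightarrow> integrable M f"
  by (rule square_integrable_imp_integrable) (simp_all add: L2_def)

lemma (in finite_measure) bounded_imp_L2:
  assumes "f \<in> borel_measurable M" "AE x in M. \<bar>f x\<bar> \<le> K"
  shows "f \<in> L2 M"
proof -
  have "integrable M (\<lambda>x. (f x)^2)"
  proof (rule Bochner_Integration.integrable_bound[OF integrable_const[of "K^2"]])
    show "(\<lambda>x. (f x)^2) \<in> borel_measurable M"
      using assms(1) by measurable
    show "AE x in M. norm ((f x)^2) \<le> norm (K^2)"
      using assms(2) by eventually_elim (simp add: square_le_of_abs_le)
  qed
  with assms(1) show ?thesis by (simp add: L2_def)
qed

lemma L2_integrable_mult:
  assumes "f \<in> L2 M" "g \<in> L2 M" shows "integrable M (\<lambda>x. f x * g x)"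
proof (rule Bochner_Integration.integrable_bound)
  show "integrable M (\<lambda>x. (f x)^2 + (g x)^2)"
    using assms by (simp add: L2_def)
  show "(\<lambda>x. f x * g x) \<in> borel_measurable M"
    using assms by (simp add: L2_def borel_measurable_times)
  show "AE x in M. norm (f x * g x) \<le> norm ((f x)^2 + (g x)^2)"
  proof (intro AE_I2)
    fix x
    have "2 * \<bar>f x * g x\<bar> \<le> (f x)^2 + (g x)^2"
      using sum_squares_bound[of "\<bar>f x\<bar>" "\<bar>g x\<bar>"] by (simp add: abs_mult)
    then show "norm (f x * g x) \<le> norm ((f x)^2 + (g x)^2)"
      by simp
  qed
qed

lemma L2_lin_comb:
  assumes "f \<in> L2 M" "g \<in> L2 M" shows "(\<lambda>x. a * f x + b * g x) \<in> L2 M"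
proof -
  have "(\<lambda>x. (a * f x + b * g x)^2)
      = (\<lambda>x. a^2 * (f x)^2 + 2 * a * b * (f x * g x) + b^2 * (g x)^2)"
    by (auto simp: power2_eq_square algebra_simps)
  then show ?thesis
    using assms L2_integrable_mult[OF assms]
    by (simp add: L2_def borel_measurable_add borel_measurable_times)
qed

lemma integral_square_lin_comb:
  assumes "f \<in> L2 M" "g \<in> L2 M"
  shows "(\<integral>x. (a * f x + b * g x)^2 \<partial>M)
       = a^2 * (\<integral>x. (f x)^2 \<partial>M) + 2 * a * b * (\<integral>x. f x * g x \<partial>M) + b^2 * (\<integral>x. (g x)^2 \<partial>M)"
proof -
  have "(\<lambda>x. (a * f x + b * g x)^2)
      = (\<lambda>x. a^2 * (f x)^2 + 2 * a * b * (f x * g x) + b^2 * (g x)^2)"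
    by (auto simp: power2_eq_square algebra_simps)
  then show ?thesis
    using assms L2_integrable_mult[OF assms] by (simp add: L2_def)
qed

lemma (in prob_space) square_integral_le_integral_square:
  assumes "f \<in> L2 M"
  shows "(\<integral>x. f x \<partial>M)^2 \<le> (\<integral>x. (f x)^2 \<partial>M)"
proof -
  define m where "m = (\<integral>x. f x \<partial>M)"
  have f: "integrable M f" "integrable M (\<lambda>x. (f x)^2)"
    using assms by (simp_all add: L2_integrable L2_integrable_square)
  have "(\<lambda>x. (f x - m)^2) = (\<lambda>x. (f x)^2 - 2 * m * f x + m^2)"
    by (auto simp: power2_eq_square algebra_simps)
  then have "(\<integral>x. (f x - m)^2 \<partial>M) = (\<integral>x. (f x)^2 \<partial>M) - m^2"
    using f by (simp add: m_def power2_eq_square prob_space)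
  moreover have "0 \<le> (\<integral>x. (f x - m)^2 \<partial>M)"
    by (simp add: integral_nonneg_AE)
  ultimately show ?thesis by (simp add: m_def)
qed

lemma (in prob_space) integral_square_le_integral_unit:
  assumes "g \<in> L2 M" "\<And>x. 0 \<le> g x \<and> g x \<le> 1"
  shows "(\<integral>x. (g x)^2 \<partial>M) \<le> (\<integral>x. g x \<partial>M)" and "(\<integral>x. (g x)^2 \<partial>M) \<le> 1"
proof -
  have "(g x)^2 \<le> g x" "(g x)^2 \<le> 1" for x
    using assms(2)[of x] by (simp_all add: power2_eq_square mult_le_one mult_left_le)
  then show "(\<integral>x. (g x)^2 \<partial>M) \<le> (\<integral>x. g x \<partial>M)" "(\<integral>x. (g x)^2 \<partial>M) \<le> 1"
    using assms(1) integral_mono[of M "\<lambda>x. (g x)^2" "\<lambda>_. 1"] prob_space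
    by (auto intro!: integral_mono simp: L2_integrable L2_integrable_square)
qed

lemma linfnorm_AE: "AE x in M. ereal \<bar>f x\<bar> \<le> linfnorm M f"
  unfolding linfnorm_def by (rule esssup_AE)

lemma linfnorm_le_1:
  "f \<in> borel_measurable M \<Longrightarrow> (\<And>x. \<bar>f x\<bar> \<le> 1) \<Longrightarrow> linfnorm M f \<le> 1"
  unfolding linfnorm_def by (intro esssup_I) auto

lemma (in prob_space) linfnorm_finite:
  assumes "linfnorm M f \<noteq> \<infinity>"
  obtains L where "linfnorm M f = ereal L" "0 \<le> L" "AE x in M. \<bar>f x\<bar> \<le> L"
proof -
  have "AE x in M. 0 \<le> linfnorm M f"
    using linfnorm_AE[of f M] by eventually_elim (metis abs_ge_zero ereal_less_eq(5) order_trans)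
  then have "0 \<le> linfnorm M f" by simp
  then obtain L where "linfnorm M f = ereal L" "0 \<le> L"
    using assms by (cases "linfnorm M f") auto
  with linfnorm_AE[of f M] show ?thesis using that by auto
qed

lemma LIMSEQ_one_over_Suc: "(\<lambda>n. 1 / (real n + 1)) \<longlonglongrightarrow> 0"
  using LIMSEQ_Suc[OF lim_1_over_n] by (simp add: add.commute)

lemma cauchy_of_dominated_by_null:
  fixes q :: "nat \<Rightarrow> nat \<Rightarrow> real"
  assumes le: "\<And>j k. k \<le> j \<Longrightarrow> q j k \<le> b k" and sym: "\<And>j k. q j k = q k j"
    and b: "b \<longlonglongrightarrow> 0"
  shows "\<forall>e>0. \<exists>N. \<forall>m\<ge>N. \<forall>n\<ge>N. q m n < e"
proof (intro allI impI)
  fix e :: real assume "e > 0"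
  with b have "\<forall>\<^sub>F k in sequentially. b k < e"
    by (rule order_tendstoD(2))
  then obtain N where N: "\<And>k. k \<ge> N \<Longrightarrow> b k < e"
    by (auto simp: eventually_sequentially)
  have "q m n < e" if "m \<ge> N" "n \<ge> N" for m n
  proof (cases "n \<le> m")
    case True
    then show ?thesis
      using le[of n m] N[of n] that by linarith
  next
    case False
    then show ?thesis
      using le[of m n] N[of m] that sym[of m n] by linarith
  qed
  then show "\<exists>N. \<forall>m\<ge>N. \<forall>n\<ge>N. q m n < e"
    by blast
qed

lemma discriminant_le_of_nonneg:
  fixes A B C :: real
  assumes C: "C \<ge> 0" and nonneg: "\<And>q. 0 \<le> A - 2 * q * B + q^2 * C"
  shows "B^2 \<le> A * C"
proof (cases "C = 0")
  case True
  have "B = 0"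
  proof (rule ccontr)
    assume "B \<noteq> 0"
    then show False
      using nonneg[of "(A + 1) / (2 * B)"] True by (simp add: field_simps)
  qed
  with True show ?thesis by simp
next
  case False
  with C have "C > 0" by simp
  then show ?thesis
    using nonneg[of "B / C"] by (simp add: field_simps power2_eq_square)
qed

lemma discriminant_le_of_nonneg_Rats:
  fixes A B C :: real
  assumes C: "C \<ge> 0" and nonneg: "\<And>q. q \<in> \<rat> \<Longrightarrow> 0 \<le> A - 2 * q * B + q^2 * C"
  shows "B^2 \<le> A * C"
proof (rule discriminant_le_of_nonneg[OF C])
  fix q :: real
  have "continuous_on (closure \<rat>) (\<lambda>q. A - 2 * q * B + q^2 * C)"
    by (intro continuous_intros)
  then show "0 \<le> A - 2 * q * B + q^2 * C"
    using continuous_ge_on_closure[of \<rat> "\<lambda>q. A - 2 * q * B + q^2 * C" q 0] nonneg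
    by (simp add: Rats_closure_real)
qed

definition clip :: "real \<Rightarrow> real \<Rightarrow> real" where
  "clip K y = max (- K) (min K y)"

lemma clip_measurable [measurable]: "clip K \<in> borel_measurable borel"
  unfolding clip_def by measurable

lemma abs_clip_le_bound: "K \<ge> 0 \<Longrightarrow> \<bar>clip K y\<bar> \<le> K"
  and abs_clip_le: "K \<ge> 0 \<Longrightarrow> \<bar>clip K y\<bar> \<le> \<bar>y\<bar>"
  and abs_diff_clip_le: "K \<ge> 0 \<Longrightarrow> \<bar>y - clip K y\<bar> \<le> \<bar>y\<bar>"
  unfolding clip_def by auto

lemma clip_square_le_mult: "K \<ge> 0 \<Longrightarrow> (clip K y)^2 \<le> y * clip K y"
  using mult_right_mono[of K y K] mult_right_mono[of K "- y" K]
  unfolding clip_def by (auto simp: power2_eq_square max_def min_def)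

lemma eventually_clip_eq: "\<forall>\<^sub>F n in sequentially. clip (real n + 1) y = y"
proof -
  obtain N :: nat where "\<bar>y\<bar> \<le> real N"
    using real_arch_simple by blast
  then show ?thesis
    unfolding eventually_sequentially clip_def by (intro exI[of _ N]) auto
qed

lemma integral_square_clip_tendsto:
  assumes "f \<in> L2 M"
  shows "(\<lambda>n. \<integral>x. (clip (real n + 1) (f x))^2 \<partial>M) \<longlonglongrightarrow> (\<integral>x. (f x)^2 \<partial>M)"
proof -
  have [measurable]: "f \<in> borel_measurable M"
    using assms by (rule L2_measurable)
  show ?thesis
  proof (rule integral_dominated_convergence[where w="\<lambda>x. (f x)^2"])
    show "AE x in M. (\<lambda>n. (clip (real n + 1) (f x))^2) \<longlonglongrightarrow> (f x)^2"
      by (intro AE_I2 tendsto_intros tendsto_eventually eventually_clip_eq)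
    show "AE x in M. norm ((clip (real n + 1) (f x))^2) \<le> (f x)^2" for n
      using square_le_of_abs_le[OF abs_clip_le[of "real n + 1"]] by simp
  qed (simp_all add: L2_integrable_square[OF assms])
qed

lemma integral_square_diff_clip_tendsto_0:
  assumes "f \<in> L2 M"
  shows "(\<lambda>n. \<integral>x. (f x - clip (real n + 1) (f x))^2 \<partial>M) \<longlonglongrightarrow> 0"
proof -
  have [measurable]: "f \<in> borel_measurable M"
    using assms by (rule L2_measurable)
  have "(\<lambda>n. \<integral>x. (f x - clip (real n + 1) (f x))^2 \<partial>M) \<longlonglongrightarrow> (\<integral>x. 0 \<partial>M)"
  proof (rule integral_dominated_convergence[where w="\<lambda>x. (f x)^2"])
    show "AE x in M. (\<lambda>n. (f x - clip (real n + 1) (f x))^2) \<longlonglongrightarrow> 0"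
    proof (intro AE_I2 tendsto_eventually)
      fix x
      show "\<forall>\<^sub>F n in sequentially. (f x - clip (real n + 1) (f x))^2 = 0"
        using eventually_clip_eq[of "f x"] by eventually_elim simp
    qed
    show "AE x in M. norm ((f x - clip (real n + 1) (f x))^2) \<le> (f x)^2" for n
      using square_le_of_abs_le[OF abs_diff_clip_le[of "real n + 1"]] by simp
  qed (simp_all add: L2_integrable_square[OF assms])
  then show ?thesis by simp
qed

lemma l2norm_tendsto_0_iff:
  "((\<lambda>t. l2norm M (g t)) \<longlongrightarrow> 0) F \<longleftrightarrow> ((\<lambda>t. \<integral>x. (g t x)^2 \<partial>M) \<longlongrightarrow> 0) F"
proof
  assume "((\<lambda>t. l2norm M (g t)) \<longlongrightarrow> 0) F"
  then have "((\<lambda>t. (l2norm M (g t))^2) \<longlongrightarrow> 0^2) F"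
    by (rule tendsto_power)
  then show "((\<lambda>t. \<integral>x. (g t x)^2 \<partial>M) \<longlongrightarrow> 0) F"
    by (simp add: l2norm_def integral_nonneg_AE)
next
  assume "((\<lambda>t. \<integral>x. (g t x)^2 \<partial>M) \<longlongrightarrow> 0) F"
  then show "((\<lambda>t. l2norm M (g t)) \<longlongrightarrow> 0) F"
    unfolding l2norm_def using tendsto_real_sqrt by fastforce
qed

section \<open>Dirichlet forms\<close>

definition weak_poincare_bound ::
  "'a measure \<Rightarrow> ('a \<Rightarrow> real) set \<Rightarrow> (('a \<Rightarrow> real) \<Rightarrow> ('a \<Rightarrow> real) \<Rightarrow> real) \<Rightarrow> real \<Rightarrow> real \<Rightarrow> bool"
  where "weak_poincare_bound M D E r a \<longleftrightarrow>
    (\<forall>f\<in>D. ereal (\<integral>x. (f x)^2 \<partial>M) \<le> ereal (a * E f f) + ereal r * (linfnorm M f)^2)"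

locale prob_dirichlet_form = prob_space M for M :: "'a measure" +
  fixes D :: "('a \<Rightarrow> real) set"
    and E :: "('a \<Rightarrow> real) \<Rightarrow> ('a \<Rightarrow> real) \<Rightarrow> real"
  assumes dirichlet_form: "dirichlet_form M D E"
begin

lemma domain_subset_L2: "D \<subseteq> L2 M"
  using dirichlet_form by (simp add: dirichlet_form_def)

lemma domain_add: "f \<in> D \<Longrightarrow> g \<in> D \<Longrightarrow> (\<lambda>x. f x + g x) \<in> D"
  using dirichlet_form by (simp add: dirichlet_form_def)

lemma domain_scale: "f \<in> D \<Longrightarrow> (\<lambda>x. c * f x) \<in> D"
  using dirichlet_form by (simp add: dirichlet_form_def)

lemma form_sym: "f \<in> D \<Longrightarrow> g \<in> D \<Longrightarrow> E f g = E g f"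
  using dirichlet_form by (simp add: dirichlet_form_def)

lemma form_add_left: "f \<in> D \<Longrightarrow> g \<in> D \<Longrightarrow> h \<in> D \<Longrightarrow> E (\<lambda>x. f x + g x) h = E f h + E g h"
  using dirichlet_form unfolding dirichlet_form_def by blast

lemma form_scale_left: "f \<in> D \<Longrightarrow> g \<in> D \<Longrightarrow> E (\<lambda>x. c * f x) g = c * E f g"
  using dirichlet_form unfolding dirichlet_form_def by blast

lemma form_nonneg: "f \<in> D \<Longrightarrow> 0 \<le> E f f"
  using dirichlet_form by (simp add: dirichlet_form_def)

lemma form_complete:
  assumes "\<And>n. u n \<in> D"
    and "\<forall>e>0. \<exists>N. \<forall>m\<ge>N. \<forall>n\<ge>N. E1 M E (\<lambda>x. u m x - u n x) < e"
  shows "\<exists>f\<in>D. (\<lambda>n. E1 M E (\<lambda>x. u n x - f x)) \<longlonglongrightarrow> 0"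
  using dirichlet_form assms unfolding dirichlet_form_def by blast

lemma unit_contraction_mem: "f \<in> D \<Longrightarrow> (\<lambda>x. min 1 (max 0 (f x))) \<in> D"
  using dirichlet_form by (simp add: dirichlet_form_def)

lemma unit_contraction_form_le:
  "f \<in> D \<Longrightarrow> E (\<lambda>x. min 1 (max 0 (f x))) (\<lambda>x. min 1 (max 0 (f x))) \<le> E f f"
  using dirichlet_form by (simp add: dirichlet_form_def)

lemma domain_L2: "f \<in> D \<Longrightarrow> f \<in> L2 M"
  using domain_subset_L2 by blast

lemma domain_lin_comb: "f \<in> D \<Longrightarrow> g \<in> D \<Longrightarrow> (\<lambda>x. a * f x + b * g x) \<in> D"
  by (intro domain_add domain_scale)

lemma form_scale: "f \<in> D \<Longrightarrow> E (\<lambda>x. c * f x) (\<lambda>x. c * f x) = c^2 * E f f"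
  using form_scale_left[of f "\<lambda>x. c * f x" c] form_sym[of f "\<lambda>x. c * f x"] form_scale_left[of f f c]
  by (simp add: domain_scale power2_eq_square)

lemma form_lin_comb:
  assumes f: "f \<in> D" and g: "g \<in> D"
  shows "E (\<lambda>x. a * f x + b * g x) (\<lambda>x. a * f x + b * g x)
       = a^2 * E f f + 2 * a * b * E f g + b^2 * E g g"
proof -
  define p q where "p = (\<lambda>x. a * f x)" and "q = (\<lambda>x. b * g x)"
  have pq: "p \<in> D" "q \<in> D" "(\<lambda>x. p x + q x) \<in> D"
    unfolding p_def q_def using f g by (simp_all add: domain_scale domain_lin_comb)
  have "E (\<lambda>x. p x + q x) (\<lambda>x. p x + q x) = E p p + 2 * E p q + E q q"
    using form_add_left[OF pq(1,2,3)] form_sym[OF pq(1) pq(3)] form_sym[OF pq(2) pq(3)]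
      form_add_left[OF pq(1,2,1)] form_add_left[OF pq(1,2,2)] form_sym[OF pq(1,2)]
    by simp
  moreover have "E p q = a * b * E f g"
    using form_scale_left[OF f pq(2), of a] form_sym[OF f pq(2)] form_scale_left[OF g f, of b]
      form_sym[OF f g]
    by (simp add: p_def q_def)
  ultimately show ?thesis
    using form_scale[OF f, of a] form_scale[OF g, of b] by (simp add: p_def q_def)
qed

lemma form_abs_cross_le:
  assumes "f \<in> D" "g \<in> D"
  shows "2 * \<bar>E f g\<bar> \<le> E f f + E g g"
  using form_nonneg[OF domain_lin_comb[OF assms, of 1 1]] form_lin_comb[OF assms, of 1 1]
    form_nonneg[OF domain_lin_comb[OF assms, of 1 "-1"]] form_lin_comb[OF assms, of 1 "-1"]
  by simp

lemma E1_lin_comb: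
  assumes f: "f \<in> D" and g: "g \<in> D"
  shows "E1 M E (\<lambda>x. a * f x + b * g x)
       = a^2 * E1 M E f + 2 * a * b * (E f g + (\<integral>x. f x * g x \<partial>M)) + b^2 * E1 M E g"
  using form_lin_comb[OF assms, of a b]
    integral_square_lin_comb[OF domain_L2[OF f] domain_L2[OF g], of a b]
  unfolding E1_def by (simp add: algebra_simps)

lemma E1_nonneg: "f \<in> D \<Longrightarrow> 0 \<le> E1 M E f"
  using form_nonneg unfolding E1_def by (simp add: integral_nonneg_AE)

lemma form_le_E1: "E f f \<le> E1 M E f"
  unfolding E1_def by (simp add: integral_nonneg_AE)

lemma integral_square_le_E1: "f \<in> D \<Longrightarrow> (\<integral>x. (f x)^2 \<partial>M) \<le> E1 M E f"
  using form_nonneg unfolding E1_def by simp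

lemma E1_parallelogram:
  assumes "f \<in> D" "g \<in> D"
  shows "E1 M E (\<lambda>x. f x - g x) + 4 * E1 M E (\<lambda>x. (1/2) * f x + (1/2) * g x)
       = 2 * E1 M E f + 2 * E1 M E g"
proof -
  have "(\<lambda>x. f x - g x) = (\<lambda>x. 1 * f x + (-1) * g x)" by simp
  then show ?thesis
    using E1_lin_comb[OF assms, of 1 "-1"] E1_lin_comb[OF assms, of "1/2" "1/2"]
    by (simp add: power2_eq_square algebra_simps)
qed

lemma E1_scale:
  assumes "f \<in> D"
  shows "E1 M E (\<lambda>x. c * f x) = c^2 * E1 M E f"
  using form_scale[OF assms, of c] unfolding E1_def by (simp add: algebra_simps)

lemma E1_diff_commute:
  assumes "f \<in> D" "g \<in> D"
  shows "E1 M E (\<lambda>x. f x - g x) = E1 M E (\<lambda>x. g x - f x)"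
proof -
  have "(\<lambda>x. g x - f x) \<in> D"
    using domain_lin_comb[OF assms(2,1), of 1 "-1"] by simp
  from E1_scale[OF this, of "-1"] show ?thesis by simp
qed

lemma integral_le_sqrt_E1: "f \<in> D \<Longrightarrow> (\<integral>x. f x \<partial>M) \<le> sqrt (E1 M E f)"
  using square_integral_le_integral_square[OF domain_L2] integral_square_le_E1
  by (metis order_trans real_le_rsqrt)

lemma form_midpoint_le:
  assumes "f \<in> D" "g \<in> D"
  shows "E (\<lambda>x. (1/2) * f x + (1/2) * g x) (\<lambda>x. (1/2) * f x + (1/2) * g x) \<le> (E f f + E g g) / 2"
  using form_lin_comb[OF assms, of "1/2" "1/2"] form_abs_cross_le[OF assms]
  by (simp add: power2_eq_square)

lemma E1_midpoint_le:
  assumes "f \<in> D" "g \<in> D"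
  shows "E1 M E (\<lambda>x. (1/2) * f x + (1/2) * g x) \<le> (E1 M E f + E1 M E g) / 2"
  using E1_parallelogram[OF assms] E1_nonneg[of "\<lambda>x. f x - g x"]
    domain_lin_comb[OF assms, of 1 "-1"]
  by simp

lemma integral_midpoint:
  assumes "f \<in> D" "g \<in> D"
  shows "(\<integral>x. (1/2) * f x + (1/2) * g x \<partial>M) = ((\<integral>x. f x \<partial>M) + (\<integral>x. g x \<partial>M)) / 2"
  using assms by (simp add: L2_integrable domain_L2)

lemma form_le_twice_sum:
  assumes "f \<in> D" "g \<in> D"
  shows "E g g \<le> 2 * E f f + 2 * E (\<lambda>x. f x - g x) (\<lambda>x. f x - g x)"
proof -
  have fg: "(\<lambda>x. f x - g x) \<in> D"
    using domain_lin_comb[OF assms, of 1 "-1"] by simp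
  have "g = (\<lambda>x. 1 * f x + (-1) * (f x - g x))" by simp
  then have "E g g = E f f - 2 * E f (\<lambda>x. f x - g x) + E (\<lambda>x. f x - g x) (\<lambda>x. f x - g x)"
    using form_lin_comb[OF assms(1) fg, of 1 "-1"] by simp
  then show ?thesis
    using form_abs_cross_le[OF assms(1) fg] by linarith
qed

text \<open>The infima of \<open>E1\<close> over the nested convex sets increase to a limit; by the
  parallelogram law, near-minimisers then form an \<open>E1\<close>-Cauchy sequence.\<close>

lemma E1_cauchy_in_nested_convex:
  assumes A_sub: "\<And>n. A n \<subseteq> D" and A_ne: "\<And>n. A n \<noteq> {}" and A_dec: "decseq A"
    and A_mid: "\<And>n f g. f \<in> A n \<Longrightarrow> g \<in> A n \<Longrightarrow> (\<lambda>x. (1/2) * f x + (1/2) * g x) \<in> A n"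
    and A_bdd: "\<And>n f. f \<in> A n \<Longrightarrow> E1 M E f \<le> B"
  obtains h where "\<And>n. h n \<in> A n"
    and "\<forall>e>0. \<exists>N. \<forall>m\<ge>N. \<forall>n\<ge>N. E1 M E (\<lambda>x. h m x - h n x) < e"
proof -
  define d where "d n = Inf (E1 M E ` A n)" for n
  have bdd: "bdd_below (E1 M E ` A n)" for n
    using E1_nonneg A_sub by (auto intro!: bdd_belowI[of _ 0])
  have d_le: "d n \<le> E1 M E f" if "f \<in> A n" for f n
    unfolding d_def using bdd that by (auto intro: cInf_lower)
  have "incseq d"
    unfolding incseq_def d_def
    using A_ne bdd A_dec by (auto intro!: cInf_superset_mono image_mono simp: decseq_def) blast
  moreover have "d n \<le> B" for n
    using A_ne[of n] d_le A_bdd by (meson equals0I order_trans)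
  ultimately obtain L where dL: "d \<longlonglongrightarrow> L" and d_le_L: "\<And>n. d n \<le> L"
    using LIMSEQ_incseq_SUP[of d] incseq_le[of d] by (metis bdd_aboveI2)
  have "\<exists>f\<in>A n. E1 M E f < d n + 1/(real n+1)" for n
    using cInf_lessD[of "E1 M E ` A n" "d n + 1/(real n+1)"] A_ne by (auto simp: d_def)
  then obtain h where h: "\<And>n. h n \<in> A n" "\<And>n. E1 M E (h n) < d n + 1/(real n+1)"
    by metis
  have hD: "h n \<in> D" for n using h A_sub by blast
  define b where "b k = 2 * (L - d k) + 4 * (1/(real k+1))" for k
  have bound: "E1 M E (\<lambda>x. h j x - h k x) \<le> b k" if "k \<le> j" for j k
  proof -
    have "h j \<in> A k" using h(1) A_dec that by (auto simp: decseq_def)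
    then have "d k \<le> E1 M E (\<lambda>x. (1/2) * h j x + (1/2) * h k x)"
      using d_le A_mid h(1) by blast
    moreover have "1/(real j+1) \<le> 1/(real k+1)"
      using that by (simp add: frac_le)
    ultimately show ?thesis
      using E1_parallelogram[OF hD hD, of j k] h(2)[of j] h(2)[of k] d_le_L[of j]
      unfolding b_def by argo
  qed
  have "b \<longlonglongrightarrow> 2 * (L - L) + 4 * 0"
    unfolding b_def by (intro tendsto_intros dL LIMSEQ_one_over_Suc)
  then have "b \<longlonglongrightarrow> 0"
    by simp
  from cauchy_of_dominated_by_null[OF bound E1_diff_commute[OF hD hD] this]
  have "\<forall>e>0. \<exists>N. \<forall>m\<ge>N. \<forall>n\<ge>N. E1 M E (\<lambda>x. h m x - h n x) < e" .
  with h(1) show ?thesis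
    using that by blast
qed

lemma E1_limit_of_vanishing_form:
  assumes h: "\<And>n. h n \<in> D" and f: "f \<in> D"
    and lim: "(\<lambda>n. E1 M E (\<lambda>x. h n x - f x)) \<longlonglongrightarrow> 0"
    and vanish: "(\<lambda>n. E (h n) (h n)) \<longlonglongrightarrow> 0"
    and mean: "\<And>n. c \<le> (\<integral>x. h n x \<partial>M)"
  shows "E f f = 0" and "c \<le> (\<integral>x. f x \<partial>M)"
proof -
  have w: "(\<lambda>x. h n x - f x) \<in> D" for n
    using domain_lin_comb[OF h[of n] f, of 1 "-1"] by simp
  have "(\<lambda>n. 2 * E (h n) (h n) + 2 * E1 M E (\<lambda>x. h n x - f x)) \<longlonglongrightarrow> 2 * 0 + 2 * 0"
    by (intro tendsto_intros vanish lim)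
  moreover have "E f f \<le> 2 * E (h n) (h n) + 2 * E1 M E (\<lambda>x. h n x - f x)" for n
    using form_le_twice_sum[OF h f, of n] form_le_E1[of "\<lambda>x. h n x - f x"] by linarith
  ultimately have "E f f \<le> 0"
    using LIMSEQ_le_const by force
  then show "E f f = 0"
    using form_nonneg[OF f] by simp
  have "c - sqrt (E1 M E (\<lambda>x. h n x - f x)) \<le> (\<integral>x. f x \<partial>M)" for n
  proof -
    have "(\<integral>x. h n x - f x \<partial>M) = (\<integral>x. h n x \<partial>M) - (\<integral>x. f x \<partial>M)"
      using L2_integrable[OF domain_L2[OF h]] L2_integrable[OF domain_L2[OF f]] by simp
    then show ?thesis
      using mean[of n] integral_le_sqrt_E1[OF w, of n] by linarith
  qed
  moreover have "(\<lambda>n. c - sqrt (E1 M E (\<lambda>x. h n x - f x))) \<longlonglongrightarrow> c - sqrt 0"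
    by (intro tendsto_intros lim)
  ultimately show "c \<le> (\<integral>x. f x \<partial>M)"
    using LIMSEQ_le_const2 by force
qed

lemma exists_null_with_positive_mean:
  assumes c: "c > 0"
    and approx: "\<And>n. \<exists>g\<in>D. c \<le> (\<integral>x. g x \<partial>M) \<and> E g g \<le> 1/(real n+1) \<and> E1 M E g \<le> 2"
  shows "\<exists>f\<in>D. E f f = 0 \<and> 0 < (\<integral>x. f x \<partial>M)"
proof -
  define A where
    "A n = {g\<in>D. c \<le> (\<integral>x. g x \<partial>M) \<and> E g g \<le> 1/(real n+1) \<and> E1 M E g \<le> 2}" for n
  have "A n \<subseteq> A m" if "m \<le> n" for m n
  proof -
    have "1/(real n+1) \<le> 1/(real m+1)"
      using that by (simp add: frac_le)
    then show ?thesis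
      unfolding A_def by auto
  qed
  then have A_dec: "decseq A"
    by (simp add: decseq_def)
  have A_mid: "(\<lambda>x. (1/2) * f x + (1/2) * g x) \<in> A n" if "f \<in> A n" "g \<in> A n" for n f g
  proof -
    have "f \<in> D" "g \<in> D"
      using that unfolding A_def by auto
    with that show ?thesis
      using form_midpoint_le[of f g] E1_midpoint_le[of f g] integral_midpoint[of f g]
        domain_lin_comb[of f g "1/2" "1/2"]
      unfolding A_def by (simp only: mem_Collect_eq) argo
  qed
  have A_sub: "A n \<subseteq> D" and A_ne: "A n \<noteq> {}" for n
    using approx[of n] unfolding A_def by auto
  have A_bdd: "E1 M E g \<le> 2" if "g \<in> A n" for n g
    using that unfolding A_def by simp
  obtain h where h: "\<And>n. h n \<in> A n"
    and cauchy: "\<forall>e>0. \<exists>N. \<forall>m\<ge>N. \<forall>n\<ge>N. E1 M E (\<lambda>x. h m x - h n x) < e"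
    using E1_cauchy_in_nested_convex[of A 2] A_sub A_ne A_dec A_mid A_bdd by blast
  have hD: "h n \<in> D" and h_mean: "c \<le> (\<integral>x. h n x \<partial>M)"
    and h_form: "E (h n) (h n) \<le> 1/(real n+1)" for n
    using h[of n] unfolding A_def by simp_all
  obtain f where f: "f \<in> D" and lim: "(\<lambda>n. E1 M E (\<lambda>x. h n x - f x)) \<longlonglongrightarrow> 0"
    using form_complete[OF hD cauchy] by blast
  have "(\<lambda>n. E (h n) (h n)) \<longlonglongrightarrow> 0"
    using h_form form_nonneg[OF hD]
    by (intro tendsto_sandwich[OF _ _ tendsto_const LIMSEQ_one_over_Suc])
      (auto intro: always_eventually)
  from E1_limit_of_vanishing_form[OF hD f lim this h_mean]
  have "E f f = 0" and "c \<le> (\<integral>x. f x \<partial>M)" .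
  with f c show ?thesis by auto
qed

lemma violation_normalise:
  assumes f: "f \<in> D" and r: "r > 0" and a: "a \<ge> 0"
    and viol: "ereal (a * E f f) + ereal r * (linfnorm M f)^2 < ereal (\<integral>x. (f x)^2 \<partial>M)"
  obtains u where "u \<in> D" "AE x in M. \<bar>u x\<bar> \<le> 1" "a * E u u + r < (\<integral>x. (u x)^2 \<partial>M)"
proof -
  have "linfnorm M f \<noteq> \<infinity>"
    using viol r by (cases "linfnorm M f") auto
  then obtain L where L: "linfnorm M f = ereal L" "0 \<le> L" and f_le_L: "AE x in M. \<bar>f x\<bar> \<le> L"
    using linfnorm_finite by blast
  have viol': "a * E f f + r * L^2 < (\<integral>x. (f x)^2 \<partial>M)"
    using viol unfolding L by simp
  have "L \<noteq> 0"
  proof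
    assume "L = 0"
    then have "AE x in M. (f x)^2 = 0"
      using f_le_L by auto
    then have "(\<integral>x. (f x)^2 \<partial>M) = 0"
      by (rule integral_eq_zero_AE)
    with viol' \<open>L = 0\<close> mult_nonneg_nonneg[OF a form_nonneg[OF f]] show False
      by simp
  qed
  with L have "L > 0" by simp
  define u where "u x = (1/L) * f x" for x
  have "u \<in> D"
    unfolding u_def by (rule domain_scale[OF f])
  moreover have "AE x in M. \<bar>u x\<bar> \<le> 1"
    using f_le_L by eventually_elim (use \<open>L > 0\<close> in \<open>simp add: u_def abs_mult\<close>)
  moreover have "a * E u u + r < (\<integral>x. (u x)^2 \<partial>M)"
  proof -
    have "(1/L)^2 * (a * E f f + r * L^2) < (1/L)^2 * (\<integral>x. (f x)^2 \<partial>M)"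
      using viol' \<open>L > 0\<close> by (intro mult_strict_left_mono) auto
    then show ?thesis
      using \<open>L > 0\<close> unfolding u_def form_scale[OF f]
      by (simp add: power_mult_distrib field_simps power2_eq_square)
  qed
  ultimately show ?thesis using that by blast
qed

lemma violation_truncate:
  assumes u: "u \<in> D" and u_le_1: "AE x in M. \<bar>u x\<bar> \<le> 1" and r: "r < (\<integral>x. (u x)^2 \<partial>M)"
  obtains g where "g \<in> D" "\<And>x. 0 \<le> g x \<and> g x \<le> 1" "r/2 < (\<integral>x. (g x)^2 \<partial>M)" "E g g \<le> E u u"
proof -
  define v where "v x = (-1) * u x" for x
  define g1 g2 where "g1 x = min 1 (max 0 (u x))" and "g2 x = min 1 (max 0 (v x))" for x
  have v: "v \<in> D" "E v v = E u u"
    unfolding v_def using domain_scale[OF u, of "-1"] form_scale[OF u, of "-1"] by simp_all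
  have g1: "g1 \<in> D" "E g1 g1 \<le> E u u"
    unfolding g1_def using unit_contraction_mem[OF u] unit_contraction_form_le[OF u] by simp_all
  have g2: "g2 \<in> D" "E g2 g2 \<le> E u u"
    unfolding g2_def using unit_contraction_mem[OF v(1)] unit_contraction_form_le[OF v(1)] v(2)
    by simp_all
  have unit: "0 \<le> g1 x \<and> g1 x \<le> 1" "0 \<le> g2 x \<and> g2 x \<le> 1" for x
    unfolding g1_def g2_def by simp_all
  have "AE x in M. (g1 x)^2 + (g2 x)^2 = (u x)^2"
    using u_le_1
  proof eventually_elim
    case (elim x)
    then show ?case
      by (cases "0 \<le> u x") (simp_all add: g1_def g2_def v_def abs_le_iff)
  qed
  moreover have "g1 \<in> borel_measurable M" "g2 \<in> borel_measurable M" "u \<in> borel_measurable M"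
    using g1(1) g2(1) u by (simp_all add: L2_measurable domain_L2)
  ultimately have "(\<integral>x. (g1 x)^2 + (g2 x)^2 \<partial>M) = (\<integral>x. (u x)^2 \<partial>M)"
    by (intro integral_cong_AE) auto
  then have "(\<integral>x. (g1 x)^2 \<partial>M) + (\<integral>x. (g2 x)^2 \<partial>M) = (\<integral>x. (u x)^2 \<partial>M)"
    using g1(1) g2(1) by (simp add: L2_integrable_square domain_L2)
  then have "r/2 < (\<integral>x. (g1 x)^2 \<partial>M) \<or> r/2 < (\<integral>x. (g2 x)^2 \<partial>M)"
    using r by linarith
  then show ?thesis
    using that g1 g2 unit by blast
qed

lemma violation_imp_unit_witness:
  assumes f: "f \<in> D" and r: "r > 0" and a: "a > 0"
    and viol: "ereal (a * E f f) + ereal r * (linfnorm M f)^2 < ereal (\<integral>x. (f x)^2 \<partial>M)"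
  shows "\<exists>g\<in>D. r/2 \<le> (\<integral>x. g x \<partial>M) \<and> E g g \<le> 1/a \<and> E1 M E g \<le> 1 + 1/a"
proof -
  obtain u where u: "u \<in> D" and u_le_1: "AE x in M. \<bar>u x\<bar> \<le> 1"
    and u_viol: "a * E u u + r < (\<integral>x. (u x)^2 \<partial>M)"
    using violation_normalise[OF f r less_imp_le[OF a] viol] by blast
  have "(\<integral>x. (u x)^2 \<partial>M) \<le> (\<integral>x. 1 \<partial>M)"
    using u_le_1 L2_integrable_square[OF domain_L2[OF u]]
    by (intro integral_mono_AE) (auto elim!: eventually_mono simp: abs_square_le_1)
  then have "(\<integral>x. (u x)^2 \<partial>M) \<le> 1"
    by (simp add: prob_space)
  moreover have "0 \<le> a * E u u"
    using form_nonneg[OF u] a by simp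
  ultimately have "a * E u u \<le> 1" and r_lt: "r < (\<integral>x. (u x)^2 \<partial>M)"
    using u_viol r by linarith+
  then have "E u u \<le> 1/a"
    using a by (simp add: field_simps)
  obtain g where g: "g \<in> D" "\<And>x. 0 \<le> g x \<and> g x \<le> 1"
    and g_sq: "r/2 < (\<integral>x. (g x)^2 \<partial>M)" and g_form: "E g g \<le> E u u"
    using violation_truncate[OF u u_le_1 r_lt] by blast
  have "(\<integral>x. (g x)^2 \<partial>M) \<le> (\<integral>x. g x \<partial>M)" "(\<integral>x. (g x)^2 \<partial>M) \<le> 1"
    using integral_square_le_integral_unit[OF domain_L2[OF g(1)] g(2)] by simp_all
  with g_sq g_form \<open>E u u \<le> 1/a\<close>
  have "r/2 \<le> (\<integral>x. g x \<partial>M) \<and> E g g \<le> 1/a \<and> E g g + (\<integral>x. (g x)^2 \<partial>M) \<le> 1 + 1/a"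
    by (intro conjI) linarith+
  with g(1) show ?thesis
    unfolding E1_def by blast
qed

lemma irreducible_imp_bound:
  assumes irr: "irreducible_form M D E" and r: "r > 0"
  shows "\<exists>a\<ge>1. weak_poincare_bound M D E r a"
proof (rule ccontr)
  assume no_bound: "\<not> ?thesis"
  have "\<exists>g\<in>D. r/2 \<le> (\<integral>x. g x \<partial>M) \<and> E g g \<le> 1/(real n+1) \<and> E1 M E g \<le> 2" for n
  proof -
    obtain f where f: "f \<in> D"
      and f_viol: "ereal ((real n+1) * E f f) + ereal r * (linfnorm M f)^2 < ereal (\<integral>x. (f x)^2 \<partial>M)"
      using no_bound[unfolded not_ex, THEN spec, of "real n + 1"]
      by (auto simp: weak_poincare_bound_def not_le)
    obtain g where "g \<in> D" "r/2 \<le> (\<integral>x. g x \<partial>M)" "E g g \<le> 1/(real n+1)"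
      and E1_g: "E1 M E g \<le> 1 + 1/(real n+1)"
      using violation_imp_unit_witness[OF f r _ f_viol] by auto
    moreover have "1/(real n+1) \<le> 1"
      by simp
    with E1_g have "E1 M E g \<le> 2"
      by linarith
    ultimately show ?thesis
      by blast
  qed
  then have "\<exists>f\<in>D. E f f = 0 \<and> 0 < (\<integral>x. f x \<partial>M)"
    using r by (intro exists_null_with_positive_mean[of "r/2"]) simp_all
  then obtain f where f: "f \<in> D" "E f f = 0" and pos: "0 < (\<integral>x. f x \<partial>M)"
    by blast
  have "AE x in M. f x = 0"
    using irr f unfolding irreducible_form_def by blast
  then have "(\<integral>x. f x \<partial>M) = 0"
    by (rule integral_eq_zero_AE)
  with pos show False by simp
qed

lemma irreducible_imp_functional_inequality:
  assumes "irreducible_form M D E"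
  shows "\<exists>\<alpha>. (\<forall>r>0. \<alpha> r > 0) \<and> (\<forall>r>0. weak_poincare_bound M D E r (\<alpha> r))"
proof -
  define \<alpha> where "\<alpha> r = (SOME a. a \<ge> 1 \<and> weak_poincare_bound M D E r a)" for r
  have "\<alpha> r \<ge> 1 \<and> weak_poincare_bound M D E r (\<alpha> r)" if "r > 0" for r
    unfolding \<alpha>_def by (rule someI_ex) (rule irreducible_imp_bound[OF assms that])
  then have "\<forall>r>0. \<alpha> r > 0" and "\<forall>r>0. weak_poincare_bound M D E r (\<alpha> r)"
    by (auto intro: less_le_trans[OF zero_less_one])
  then show ?thesis
    by blast
qed

lemma null_function_nonpos:
  assumes ineq: "\<forall>r>0. weak_poincare_bound M D E r (\<alpha> r)"
    and f: "f \<in> D" "E f f = 0"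
  shows "AE x in M. f x \<le> 0"
proof -
  define g where "g x = min 1 (max 0 (f x))" for x
  have g: "g \<in> D" "E g g = 0"
    unfolding g_def using unit_contraction_mem[OF f(1)] unit_contraction_form_le[OF f(1)]
      form_nonneg[OF unit_contraction_mem[OF f(1)]] f(2)
    by simp_all
  have "linfnorm M g \<le> 1"
    using g(1) by (intro linfnorm_le_1) (auto simp: g_def L2_measurable domain_L2)
  moreover from this have "linfnorm M g \<noteq> \<infinity>"
    by auto
  then obtain l where "linfnorm M g = ereal l" "0 \<le> l"
    using linfnorm_finite by blast
  ultimately have l: "linfnorm M g = ereal l" "0 \<le> l" "l \<le> 1"
    by simp_all
  have "(\<integral>x. (g x)^2 \<partial>M) \<le> r" if "r > 0" for r
  proof -
    have "ereal (\<integral>x. (g x)^2 \<partial>M) \<le> ereal (\<alpha> r * E g g) + ereal r * (linfnorm M g)^2"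
      using ineq that g(1) unfolding weak_poincare_bound_def by blast
    then have "(\<integral>x. (g x)^2 \<partial>M) \<le> r * l^2"
      using g(2) unfolding l(1) by simp
    also have "\<dots> \<le> r"
      using that l by (simp add: power_le_one mult_left_le)
    finally show ?thesis .
  qed
  then have "(\<integral>x. (g x)^2 \<partial>M) \<le> 0"
    by (rule dense_ge)
  moreover have "0 \<le> (\<integral>x. (g x)^2 \<partial>M)"
    by (simp add: integral_nonneg_AE)
  ultimately have "AE x in M. g x = 0"
    using integral_nonneg_eq_0_iff_AE[OF L2_integrable_square[OF domain_L2[OF g(1)]]] by simp
  then show ?thesis
    by eventually_elim (simp add: g_def min_def max_def split: if_splits)
qed

lemma functional_inequality_imp_irreducible:
  assumes "\<forall>r>0. weak_poincare_bound M D E r (\<alpha> r)"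
  shows "irreducible_form M D E"
  unfolding irreducible_form_def
proof (intro ballI impI)
  fix f assume f: "f \<in> D" "E f f = 0"
  then have "(\<lambda>x. (-1) * f x) \<in> D" "E (\<lambda>x. (-1) * f x) (\<lambda>x. (-1) * f x) = 0"
    using domain_scale[OF f(1), of "-1"] form_scale[OF f(1), of "-1"] by simp_all
  then have "AE x in M. (-1) * f x \<le> 0"
    by (rule null_function_nonpos[OF assms])
  moreover have "AE x in M. f x \<le> 0"
    by (rule null_function_nonpos[OF assms f])
  ultimately show "AE x in M. f x = 0"
    by eventually_elim simp
qed

end

section \<open>Symmetric sub-Markov semigroups\<close>

locale prob_subMarkov_semigroup = prob_space M for M :: "'a measure" +
  fixes P :: "real \<Rightarrow> ('a \<Rightarrow> real) \<Rightarrow> ('a \<Rightarrow> real)"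
  assumes semigroup: "symmetric_subMarkov_semigroup M P"
begin

lemma L2_closed: "t \<ge> 0 \<Longrightarrow> f \<in> L2 M \<Longrightarrow> P t f \<in> L2 M"
  using semigroup by (simp add: symmetric_subMarkov_semigroup_def)

lemma add_AE:
  "t \<ge> 0 \<Longrightarrow> f \<in> L2 M \<Longrightarrow> g \<in> L2 M \<Longrightarrow> AE x in M. P t (\<lambda>y. f y + g y) x = P t f x + P t g x"
  using semigroup by (simp add: symmetric_subMarkov_semigroup_def)

lemma scale_AE: "t \<ge> 0 \<Longrightarrow> f \<in> L2 M \<Longrightarrow> AE x in M. P t (\<lambda>y. c * f y) x = c * P t f x"
  using semigroup by (simp add: symmetric_subMarkov_semigroup_def)

lemma symmetric_integral:
  "t \<ge> 0 \<Longrightarrow> f \<in> L2 M \<Longrightarrow> g \<in> L2 M \<Longrightarrow> (\<integral>x. P t f x * g x \<partial>M) = (\<integral>x. f x * P t g x \<partial>M)"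
  using semigroup by (simp add: symmetric_subMarkov_semigroup_def)

lemma subMarkov:
  "t \<ge> 0 \<Longrightarrow> f \<in> L2 M \<Longrightarrow> AE x in M. 0 \<le> f x \<and> f x \<le> 1 \<Longrightarrow> AE x in M. 0 \<le> P t f x \<and> P t f x \<le> 1"
  using semigroup unfolding symmetric_subMarkov_semigroup_def by blast

lemma lin_comb_AE:
  assumes "t \<ge> 0" "f \<in> L2 M" "g \<in> L2 M"
  shows "AE x in M. P t (\<lambda>y. a * f y + b * g y) x = a * P t f x + b * P t g x"
proof -
  have "(\<lambda>y. a * f y) \<in> L2 M" "(\<lambda>y. b * g y) \<in> L2 M"
    using L2_lin_comb[OF assms(2) assms(2), of a 0] L2_lin_comb[OF assms(3) assms(3), of b 0]
    by simp_all
  then have "AE x in M. P t (\<lambda>y. a * f y + b * g y) x = P t (\<lambda>y. a * f y) x + P t (\<lambda>y. b * g y) x"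
    by (rule add_AE[OF assms(1)])
  moreover have "AE x in M. P t (\<lambda>y. a * f y) x = a * P t f x"
    by (rule scale_AE[OF assms(1,2)])
  moreover have "AE x in M. P t (\<lambda>y. b * g y) x = b * P t g x"
    by (rule scale_AE[OF assms(1,3)])
  ultimately show ?thesis
    by eventually_elim simp
qed

lemma one_L2: "(\<lambda>_. 1) \<in> L2 M"
  by (rule bounded_imp_L2[of _ 1]) simp_all

lemma one_bounds: "t \<ge> 0 \<Longrightarrow> AE x in M. 0 \<le> P t (\<lambda>_. 1) x \<and> P t (\<lambda>_. 1) x \<le> 1"
  using subMarkov[OF _ one_L2] by simp

lemma nonneg_AE:
  assumes t: "t \<ge> 0" and h: "h \<in> borel_measurable M" and bdd: "AE x in M. 0 \<le> h x \<and> h x \<le> K"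
  shows "AE x in M. 0 \<le> P t h x"
proof -
  define c where "c = 1 / (\<bar>K\<bar> + 1)"
  have c: "c > 0" "c * (\<bar>K\<bar> + 1) = 1"
    unfolding c_def by (simp_all add: add_pos_nonneg)
  have hL: "h \<in> L2 M"
    using bdd by (intro bounded_imp_L2[OF h, of K]) auto
  have "AE x in M. 0 \<le> c * h x \<and> c * h x \<le> 1"
    using bdd
  proof eventually_elim
    case (elim x)
    then have "c * h x \<le> c * (\<bar>K\<bar> + 1)"
      using c by (intro mult_left_mono) auto
    with elim c show ?case by simp
  qed
  then have "AE x in M. 0 \<le> P t (\<lambda>y. c * h y) x"
    using subMarkov[OF t] L2_lin_comb[OF hL hL, of c 0] by (auto elim: eventually_mono)
  with scale_AE[OF t hL, of c] show ?thesis
    by eventually_elim (use c in \<open>simp add: zero_le_mult_iff\<close>)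
qed

lemma mono_AE:
  assumes t: "t \<ge> 0" and f: "f \<in> borel_measurable M" "AE x in M. \<bar>f x\<bar> \<le> K"
    and g: "g \<in> borel_measurable M" "AE x in M. \<bar>g x\<bar> \<le> K"
    and le: "AE x in M. f x \<le> g x"
  shows "AE x in M. P t f x \<le> P t g x"
proof -
  have fL: "f \<in> L2 M" and gL: "g \<in> L2 M"
    using f g by (simp_all add: bounded_imp_L2)
  have "AE x in M. 0 \<le> 1 * g x + (-1) * f x \<and> 1 * g x + (-1) * f x \<le> 2 * K"
    using f(2) g(2) le by eventually_elim auto
  then have "AE x in M. 0 \<le> P t (\<lambda>y. 1 * g y + (-1) * f y) x"
    by (rule nonneg_AE[OF t, rotated]) (use f(1) g(1) in measurable)
  with lin_comb_AE[OF t gL fL, of 1 "-1"] show ?thesis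
    by eventually_elim simp
qed

lemma abs_le_mult_one:
  assumes t: "t \<ge> 0" and f: "f \<in> borel_measurable M" "AE x in M. \<bar>f x\<bar> \<le> K"
  shows "AE x in M. \<bar>P t f x\<bar> \<le> K * P t (\<lambda>_. 1) x"
proof -
  have f_le: "AE x in M. \<bar>f x\<bar> \<le> \<bar>K\<bar>"
    using f(2) by eventually_elim simp
  have "AE x in M. P t f x \<le> P t (\<lambda>_. K) x"
    using f(2) by (intro mono_AE[OF t f(1) f_le]) (auto elim: eventually_mono)
  moreover have "AE x in M. P t (\<lambda>_. - K) x \<le> P t f x"
    using f(2) by (intro mono_AE[OF t _ _ f(1) f_le]) (auto elim: eventually_mono)
  moreover have const: "AE x in M. P t (\<lambda>_. c) x = c * P t (\<lambda>_. 1) x" for c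
    using scale_AE[OF t one_L2, of c] by simp
  note const[of K] const[of "- K"]
  ultimately show ?thesis
    by eventually_elim auto
qed

lemma integral_square_le_one:
  assumes t: "t \<ge> 0" and f: "f \<in> borel_measurable M" "AE x in M. \<bar>f x\<bar> \<le> K"
  shows "(\<integral>x. (P t f x)^2 \<partial>M) \<le> K^2 * (\<integral>x. (P t (\<lambda>_. 1) x)^2 \<partial>M)"
proof -
  have "AE x in M. (P t f x)^2 \<le> K^2 * (P t (\<lambda>_. 1) x)^2"
    using abs_le_mult_one[OF t f] one_bounds[OF t]
  proof eventually_elim
    case (elim x)
    then have "\<bar>P t f x\<bar> \<le> \<bar>K * P t (\<lambda>_. 1) x\<bar>"
      using abs_ge_self order_trans by blast
    then show ?case
      by (simp add: abs_le_square_iff power_mult_distrib)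
  qed
  then have "(\<integral>x. (P t f x)^2 \<partial>M) \<le> (\<integral>x. K^2 * (P t (\<lambda>_. 1) x)^2 \<partial>M)"
    using L2_closed[OF t bounded_imp_L2[OF f]] L2_closed[OF t one_L2]
    by (intro integral_mono_AE) (simp_all add: L2_integrable_square)
  then show ?thesis by simp
qed

text \<open>Kadison--Schwarz: positivity of \<open>P t\<close> on \<open>(h - q)\<^sup>2\<close>, for all rational \<open>q\<close> at
  once, gives \<open>(P t h)\<^sup>2 \<le> P t (h\<^sup>2) \<cdot> P t 1\<close> almost everywhere.\<close>

lemma square_le_of_square_AE:
  assumes t: "t \<ge> 0" and h: "h \<in> borel_measurable M" "AE x in M. \<bar>h x\<bar> \<le> K"
  shows "AE x in M. (P t h x)^2 \<le> P t (\<lambda>y. (h y)^2) x"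
proof -
  define h2 where "h2 y = (h y)^2" for y
  have h2: "h2 \<in> borel_measurable M" "AE x in M. 0 \<le> h2 x \<and> h2 x \<le> K^2"
    using h unfolding h2_def by (measurable, auto elim!: eventually_mono simp: square_le_of_abs_le)
  have hL: "h \<in> L2 M"
    using h by (rule bounded_imp_L2)
  have "AE x in M. \<bar>h2 x\<bar> \<le> K^2"
    using h2(2) by eventually_elim simp
  then have h2L: "h2 \<in> L2 M"
    by (rule bounded_imp_L2[OF h2(1)])
  have "AE x in M. 0 \<le> P t h2 x - 2 * q * P t h x + q^2 * P t (\<lambda>_. 1) x" for q
  proof -
    define p where "p y = (-2 * q) * h y + q^2 * 1" for y
    have pL: "p \<in> L2 M"
      unfolding p_def by (rule L2_lin_comb[OF hL one_L2])
    then have [measurable]: "p \<in> borel_measurable M"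
      by (rule L2_measurable)
    have "AE x in M. 0 \<le> 1 * h2 x + 1 * p x \<and> 1 * h2 x + 1 * p x \<le> (\<bar>K\<bar> + \<bar>q\<bar>)^2"
      using h(2)
    proof eventually_elim
      case (elim x)
      have "1 * h2 x + 1 * p x = (h x - q)^2"
        unfolding h2_def p_def by (simp add: power2_eq_square algebra_simps)
      moreover have "\<bar>h x - q\<bar> \<le> \<bar>K\<bar> + \<bar>q\<bar>"
        using elim by linarith
      ultimately show ?case
        by (simp add: abs_le_square_iff[symmetric])
    qed
    then have "AE x in M. 0 \<le> P t (\<lambda>y. 1 * h2 y + 1 * p y) x"
      by (rule nonneg_AE[OF t, rotated]) (use h2(1) in measurable)
    with lin_comb_AE[OF t h2L pL, of 1 1] lin_comb_AE[OF t hL one_L2, of "-2 * q" "q^2"]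
    show ?thesis
      unfolding p_def by eventually_elim simp
  qed
  then have "AE x in M. \<forall>q::rat. 0 \<le> P t h2 x - 2 * of_rat q * P t h x + (of_rat q)^2 * P t (\<lambda>_. 1) x"
    by (simp add: AE_all_countable)
  moreover have "AE x in M. 0 \<le> P t h2 x"
    by (rule nonneg_AE[OF t h2])
  ultimately show ?thesis
    using one_bounds[OF t]
  proof eventually_elim
    case (elim x)
    then have "(P t h x)^2 \<le> P t h2 x * P t (\<lambda>_. 1) x"
      by (intro discriminant_le_of_nonneg_Rats) (auto elim!: Rats_cases)
    also have "\<dots> \<le> P t h2 x"
      using elim by (simp add: mult_left_le)
    finally show ?case unfolding h2_def .
  qed
qed

lemma contraction_bounded:
  assumes t: "t \<ge> 0" and h: "h \<in> borel_measurable M" "AE x in M. \<bar>h x\<bar> \<le> K"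
  shows "(\<integral>x. (P t h x)^2 \<partial>M) \<le> (\<integral>x. (h x)^2 \<partial>M)"
proof -
  have h2L: "(\<lambda>x. (h x)^2) \<in> L2 M"
    using h by (intro bounded_imp_L2[of _ "K^2"])
      (measurable, auto elim!: eventually_mono simp: square_le_of_abs_le)
  have "(\<integral>x. (P t h x)^2 \<partial>M) \<le> (\<integral>x. P t (\<lambda>y. (h y)^2) x * 1 \<partial>M)"
    using square_le_of_square_AE[OF t h] L2_closed[OF t bounded_imp_L2[OF h]] L2_closed[OF t h2L]
    by (intro integral_mono_AE) (simp_all add: L2_integrable L2_integrable_square)
  also have "\<dots> = (\<integral>x. (h x)^2 * P t (\<lambda>_. 1) x \<partial>M)"
    by (rule symmetric_integral[OF t h2L one_L2])
  also have "\<dots> \<le> (\<integral>x. (h x)^2 \<partial>M)"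
  proof (rule integral_mono_AE)
    show "AE x in M. (h x)^2 * P t (\<lambda>_. 1) x \<le> (h x)^2"
      using one_bounds[OF t] by eventually_elim (simp add: mult_left_le)
  qed (use L2_integrable_mult[OF h2L L2_closed[OF t one_L2]] L2_integrable[OF h2L] in auto)
  finally show ?thesis .
qed

text \<open>Since \<open>P t g\<close> need not be bounded, truncate it to \<open>v\<close>; symmetry gives
  \<open>\<integral>v\<^sup>2 \<le> \<integral>(P t g) v = \<integral>g (P t v)\<close>, and the bounded case controls \<open>P t v\<close>.\<close>

lemma L2_contraction:
  assumes t: "t \<ge> 0" and g: "g \<in> L2 M"
  shows "(\<integral>x. (P t g x)^2 \<partial>M) \<le> (\<integral>x. (g x)^2 \<partial>M)"
proof -
  have u: "P t g \<in> L2 M"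
    by (rule L2_closed[OF t g])
  have "(\<integral>x. (clip (real n + 1) (P t g x))^2 \<partial>M) \<le> (\<integral>x. (g x)^2 \<partial>M)" for n
  proof -
    define v where "v x = clip (real n + 1) (P t g x)" for x
    have v: "v \<in> borel_measurable M" "AE x in M. \<bar>v x\<bar> \<le> real n + 1"
      unfolding v_def using L2_measurable[OF u] by (simp_all add: abs_clip_le_bound)
    have vL: "v \<in> L2 M" and PvL: "P t v \<in> L2 M"
      using bounded_imp_L2[OF v] L2_closed[OF t] by blast+
    have "(\<integral>x. (v x)^2 \<partial>M) \<le> (\<integral>x. P t g x * v x \<partial>M)"
      using L2_integrable_square[OF vL] L2_integrable_mult[OF u vL]
      by (intro integral_mono) (simp_all add: v_def clip_square_le_mult)
    also have "\<dots> = (\<integral>x. g x * P t v x \<partial>M)"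
      by (rule symmetric_integral[OF t g vL])
    also have "\<dots> \<le> (\<integral>x. ((g x)^2 + (P t v x)^2) / 2 \<partial>M)"
    proof (rule integral_mono)
      show "g x * P t v x \<le> ((g x)^2 + (P t v x)^2) / 2" for x
        using sum_squares_bound[of "g x" "P t v x"] by simp
    qed (use L2_integrable_mult[OF g PvL] L2_integrable_square[OF g] L2_integrable_square[OF PvL]
        in simp_all)
    also have "\<dots> = ((\<integral>x. (g x)^2 \<partial>M) + (\<integral>x. (P t v x)^2 \<partial>M)) / 2"
      using L2_integrable_square[OF g] L2_integrable_square[OF PvL] by simp
    also have "\<dots> \<le> ((\<integral>x. (g x)^2 \<partial>M) + (\<integral>x. (v x)^2 \<partial>M)) / 2"
      using contraction_bounded[OF t v] by simp
    finally show ?thesis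
      unfolding v_def by simp
  qed
  then show ?thesis
    using LIMSEQ_le_const2[OF integral_square_clip_tendsto[OF u]] by blast
qed

lemma opnorm_inf2_eq_l2norm_one:
  assumes t: "t \<ge> 0"
  shows "opnorm_inf2 M (P t) = l2norm M (P t (\<lambda>_. 1))"
  unfolding opnorm_inf2_def
proof (rule cSup_eq_maximum)
  show "l2norm M (P t (\<lambda>_. 1)) \<in> {l2norm M (P t f) |f. f \<in> borel_measurable M \<and> (AE x in M. \<bar>f x\<bar> \<le> 1)}"
    by auto
next
  fix y assume "y \<in> {l2norm M (P t f) |f. f \<in> borel_measurable M \<and> (AE x in M. \<bar>f x\<bar> \<le> 1)}"
  then obtain f where y: "y = l2norm M (P t f)"
    and f: "f \<in> borel_measurable M" "AE x in M. \<bar>f x\<bar> \<le> 1"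
    by blast
  show "y \<le> l2norm M (P t (\<lambda>_. 1))"
    using integral_square_le_one[OF t f] unfolding y l2norm_def by simp
qed

lemma integral_square_le_clip_split:
  assumes t: "t \<ge> 0" and f: "f \<in> L2 M" and K: "K \<ge> 0"
  shows "(\<integral>x. (P t f x)^2 \<partial>M)
       \<le> 2 * K^2 * (\<integral>x. (P t (\<lambda>_. 1) x)^2 \<partial>M) + 2 * (\<integral>x. (f x - clip K (f x))^2 \<partial>M)"
proof -
  define b r where "b = (\<lambda>x. clip K (f x))" and "r = (\<lambda>x. f x - clip K (f x))"
  have b: "b \<in> borel_measurable M" "AE x in M. \<bar>b x\<bar> \<le> K"
    unfolding b_def using L2_measurable[OF f] K by (simp_all add: abs_clip_le_bound)
  have bL: "b \<in> L2 M"
    using b by (rule bounded_imp_L2)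
  have rL: "r \<in> L2 M"
    using L2_lin_comb[OF f bL, of 1 "-1"] by (simp add: r_def b_def)
  have "AE x in M. P t f x = 1 * P t b x + 1 * P t r x"
    using lin_comb_AE[OF t bL rL, of 1 1] by (simp add: b_def r_def)
  then have "AE x in M. (P t f x)^2 \<le> 2 * (P t b x)^2 + 2 * (P t r x)^2"
  proof eventually_elim
    case (elim x)
    then show ?case
      using sum_squares_bound[of "P t b x" "P t r x"] by (simp add: power2_sum)
  qed
  then have "(\<integral>x. (P t f x)^2 \<partial>M) \<le> (\<integral>x. 2 * (P t b x)^2 + 2 * (P t r x)^2 \<partial>M)"
    using L2_closed[OF t f] L2_closed[OF t bL] L2_closed[OF t rL]
    by (intro integral_mono_AE) (simp_all add: L2_integrable_square)
  also have "\<dots> = 2 * (\<integral>x. (P t b x)^2 \<partial>M) + 2 * (\<integral>x. (P t r x)^2 \<partial>M)"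
    using L2_closed[OF t bL] L2_closed[OF t rL] by (simp add: L2_integrable_square)
  also have "\<dots> \<le> 2 * (K^2 * (\<integral>x. (P t (\<lambda>_. 1) x)^2 \<partial>M)) + 2 * (\<integral>x. (r x)^2 \<partial>M)"
    using integral_square_le_one[OF t b] L2_contraction[OF t rL] by simp
  finally show ?thesis
    by (simp add: r_def)
qed

lemma decay_of_one_imp_decay:
  assumes f: "f \<in> L2 M" and one: "((\<lambda>t. \<integral>x. (P t (\<lambda>_. 1) x)^2 \<partial>M) \<longlongrightarrow> 0) at_top"
  shows "((\<lambda>t. \<integral>x. (P t f x)^2 \<partial>M) \<longlongrightarrow> 0) at_top"
proof (rule tendstoI)
  fix e :: real assume "e > 0"
  then have "\<forall>\<^sub>F n in sequentially. (\<integral>x. (f x - clip (real n + 1) (f x))^2 \<partial>M) < e/4"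
    using integral_square_diff_clip_tendsto_0[OF f] by (intro order_tendstoD) auto
  then obtain n where n: "(\<integral>x. (f x - clip (real n + 1) (f x))^2 \<partial>M) < e/4"
    by (auto simp: eventually_sequentially)
  define K where "K = real n + 1"
  have "K > 0" by (simp add: K_def)
  with \<open>e > 0\<close> have "e / (4 * K^2) > 0"
    by (intro divide_pos_pos) auto
  then have "\<forall>\<^sub>F t in at_top. (\<integral>x. (P t (\<lambda>_. 1) x)^2 \<partial>M) < e / (4 * K^2)"
    using one by (rule order_tendstoD[rotated])
  with eventually_ge_at_top[of 0]
  show "\<forall>\<^sub>F t in at_top. dist (\<integral>x. (P t f x)^2 \<partial>M) 0 < e"
  proof eventually_elim
    case (elim t)
    have "K^2 * (\<integral>x. (P t (\<lambda>_. 1) x)^2 \<partial>M) < K^2 * (e / (4 * K^2))"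
      using elim \<open>K > 0\<close> by (intro mult_strict_left_mono) simp_all
    then have "K^2 * (\<integral>x. (P t (\<lambda>_. 1) x)^2 \<partial>M) < e/4"
      using \<open>K > 0\<close> by simp
    then have "(\<integral>x. (P t f x)^2 \<partial>M) < e"
      using integral_square_le_clip_split[OF _ f, of t K] elim n \<open>K > 0\<close> unfolding K_def by simp
    moreover have "0 \<le> (\<integral>x. (P t f x)^2 \<partial>M)"
      by (simp add: integral_nonneg_AE)
    ultimately show ?case by simp
  qed
qed

lemma L2_decay_iff_opnorm_decay:
  "(\<forall>f\<in>L2 M. ((\<lambda>t. l2norm M (P t f)) \<longlongrightarrow> 0) at_top)
    \<longleftrightarrow> ((\<lambda>t. opnorm_inf2 M (P t)) \<longlongrightarrow> 0) at_top"
proof -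
  have "\<forall>\<^sub>F t in at_top. l2norm M (P t (\<lambda>_. 1)) = opnorm_inf2 M (P t)"
    using eventually_ge_at_top[of 0] by eventually_elim (simp add: opnorm_inf2_eq_l2norm_one)
  then have "((\<lambda>t. opnorm_inf2 M (P t)) \<longlongrightarrow> 0) at_top \<longleftrightarrow> ((\<lambda>t. l2norm M (P t (\<lambda>_. 1))) \<longlongrightarrow> 0) at_top"
    by (rule tendsto_cong[symmetric])
  then show ?thesis
    using one_L2 decay_of_one_imp_decay by (auto simp: l2norm_tendsto_0_iff)
qed

end

theorem lemma4p3:
  fixes M :: "'a measure"
  assumes "prob_space M"
  shows "(\<forall>D E. dirichlet_form M D E \<and> non_conservative M D E \<longrightarrow>
            (irreducible_form M D E \<longleftrightarrow>
              (\<exists>\<alpha>::real \<Rightarrow> real. (\<forall>r>0. \<alpha> r > 0) \<and>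
                 (\<forall>r>0. \<forall>f\<in>D. ereal (\<integral>x. (f x)^2 \<partial>M)
                     \<le> ereal (\<alpha> r * E f f) + ereal r * (linfnorm M f)^2))))
       \<and> (\<forall>P. symmetric_subMarkov_semigroup M P \<longrightarrow>
            ((\<forall>f\<in>L2 M. ((\<lambda>t. l2norm M (P t f)) \<longlongrightarrow> 0) at_top)
             \<longleftrightarrow> ((\<lambda>t. opnorm_inf2 M (P t)) \<longlongrightarrow> 0) at_top))"
proof (intro conjI allI impI)
  fix D E
  assume "dirichlet_form M D E \<and> non_conservative M D E"
  then interpret prob_dirichlet_form M D E
    using assms by (simp add: prob_dirichlet_form_def prob_dirichlet_form_axioms_def)
  show "irreducible_form M D E \<longleftrightarrow>
          (\<exists>\<alpha>::real \<Rightarrow> real. (\<forall>r>0. \<alpha> r > 0) \<and>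
             (\<forall>r>0. \<forall>f\<in>D. ereal (\<integral>x. (f x)^2 \<partial>M)
                 \<le> ereal (\<alpha> r * E f f) + ereal r * (linfnorm M f)^2))"
    using irreducible_imp_functional_inequality functional_inequality_imp_irreducible
    unfolding weak_poincare_bound_def by blast
next
  fix P
  assume "symmetric_subMarkov_semigroup M P"
  then interpret prob_subMarkov_semigroup M P
    using assms by (simp add: prob_subMarkov_semigroup_def prob_subMarkov_semigroup_axioms_def)
  show "(\<forall>f\<in>L2 M. ((\<lambda>t. l2norm M (P t f)) \<longlongrightarrow> 0) at_top)
          \<longleftrightarrow> ((\<lambda>t. opnorm_inf2 M (P t)) \<longlongrightarrow> 0) at_top"
    by (rule L2_decay_iff_opnorm_decay)
qed

end
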